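(* Let $g\colon\mathbb R^d\to[0,+\infty)$ be a proper log-concave function whose support contains the origin in its interior. Then a set $U\subset\mathbb R^d$ is star-like with respect to $g$ if and only if $\langle p,u\rangle>-1$ for all $u\in U\cap\operatorname{supp}g$ and all $p\in\partial(-\ln g)(u)$.
   Context: $\operatorname{supp}g=\{x:g(x)>0\}$; proper: upper semi-continuous with finite positive integral. $\partial\psi(u)=\{p:\psi(y)\ge\psi(u)+\langle p,y-u\rangle\ \forall y\}$. Lifting $\mathrm{lift}(g)=\{(x,y)\in\mathbb R^d\times\mathbb R:x\in\overline{\operatorname{supp}g},|y|\le g(x)\}$. Fréchet normal cone $N_A(a_0)=\{v:\forall\varepsilon>0\,\exists\delta>0:\langle v,a-a_0\rangle\le\varepsilon|a-a_0|\ \forall a\in A,|a-a_0|\le\delta\}$. $U$ is star-like with respect to $g$ if for every $u\in U\cap\operatorname{supp}g$, $\langle(u,g(u)),\bar v\rangle>0$ for all nonzero $\bar v\in N_{\mathrm{lift}(g)}((u,g(u)))$. *)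

theory Defs
  imports "HOL-Analysis.Analysis"
begin

definition supp :: "('a::euclidean_space \<Rightarrow> real) \<Rightarrow> 'a set" where
  "supp g = {x. g x > 0}"

definition upper_semicont :: "('a::euclidean_space \<Rightarrow> real) \<Rightarrow> bool" where
  "upper_semicont g \<longleftrightarrow>
     (\<forall>x. \<forall>t. g x < t \<longrightarrow> (\<exists>\<delta>>0. \<forall>y. dist y x < \<delta> \<longrightarrow> g y < t))"

definition proper_fun :: "('a::euclidean_space \<Rightarrow> real) \<Rightarrow> bool" where
  "proper_fun g \<longleftrightarrow> upper_semicont g \<and>
     (\<integral>\<^sup>+ x. ennreal (g x) \<partial>lborel) < \<infinity> \<and>
     (\<integral>\<^sup>+ x. ennreal (g x) \<partial>lborel) > 0"

definition log_concave :: "('a::euclidean_space \<Rightarrow> real) \<Rightarrow> bool" where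
  "log_concave g \<longleftrightarrow> (\<forall>x y t. 0 < t \<and> t < 1 \<longrightarrow>
     g ((1 - t) *\<^sub>R x + t *\<^sub>R y) \<ge> g x powr (1 - t) * g y powr t)"

definition neg_ln :: "('a::euclidean_space \<Rightarrow> real) \<Rightarrow> 'a \<Rightarrow> ereal" where
  "neg_ln g x = (if g x > 0 then ereal (- ln (g x)) else \<infinity>)"

definition subdiff :: "('a::euclidean_space \<Rightarrow> ereal) \<Rightarrow> 'a \<Rightarrow> 'a set" where
  "subdiff \<psi> u = {p. \<forall>y. \<psi> y \<ge> \<psi> u + ereal (inner p (y - u))}"

definition lift :: "('a::euclidean_space \<Rightarrow> real) \<Rightarrow> ('a \<times> real) set" where
  "lift g = {(x, y). x \<in> closure (supp g) \<and> \<bar>y\<bar> \<le> g x}"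

definition frechet_normal_cone :: "('b::real_inner) set \<Rightarrow> 'b \<Rightarrow> 'b set" where
  "frechet_normal_cone A a0 = {v. \<forall>\<epsilon>>0. \<exists>\<delta>>0. \<forall>a\<in>A. norm (a - a0) \<le> \<delta> \<longrightarrow>
      inner v (a - a0) \<le> \<epsilon> * norm (a - a0)}"

definition star_like_wrt :: "'a::euclidean_space set \<Rightarrow> ('a \<Rightarrow> real) \<Rightarrow> bool" where
  "star_like_wrt U g \<longleftrightarrow> (\<forall>u \<in> U \<inter> supp g. \<forall>v \<in> frechet_normal_cone (lift g) (u, g u).
      v \<noteq> 0 \<longrightarrow> inner (u, g u) v > 0)"

end

(*
  Both directions reduce to the shape of the Frechet normals of the hypograph lift g at (u, g u).
  A subgradient p of -ln g at u gives the majorant g x \<le> g u exp (-<p, x - u>), a smooth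
  function touching lift g from above, so (g u p, 1) is a normal there. Conversely, by
  log-concavity the curve t \<mapsto> (u + t (x - u), g(u)^(1-t) g(x)^t) stays in lift g; testing a
  normal (w, s) against its tangent shows s \<ge> 0 and, for s > 0, that w / (s g u) is a
  subgradient. A normal with s = 0 confines supp g to a half-space through u, and the ball
  around the origin inside supp g then makes <w, u> positive.
*)
theory Submission
  imports Defs
begin

lemma frechet_normal_cone_inner_tangent_le:
  fixes v d a0 :: "'b::real_inner"
  assumes v: "v \<in> frechet_normal_cone A a0"
    and tangent: "((\<lambda>t. (q t - a0) /\<^sub>R t) \<longlongrightarrow> d) (at_right 0)"
    and in_A: "\<forall>\<^sub>F t in at_right 0. q t \<in> A"
  shows "inner v d \<le> 0"
proof -
  have "((\<lambda>t. t *\<^sub>R ((q t - a0) /\<^sub>R t)) \<longlongrightarrow> 0 *\<^sub>R d) (at_right 0)"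
    by (intro tendsto_intros tangent)
  moreover have "\<forall>\<^sub>F t in at_right 0. t *\<^sub>R ((q t - a0) /\<^sub>R t) = q t - a0"
    using eventually_at_right_less[of 0] by (rule eventually_mono) simp
  ultimately have "((\<lambda>t. q t - a0) \<longlongrightarrow> 0) (at_right 0)"
    using tendsto_cong by fastforce
  then have to_a0: "((\<lambda>t. norm (q t - a0)) \<longlongrightarrow> 0) (at_right 0)"
    using tendsto_norm_zero by blast
  have "inner v d \<le> e * norm d" if e: "e > 0" for e
  proof -
    obtain \<delta> where "\<delta> > 0" and \<delta>: "\<And>a. a \<in> A \<Longrightarrow> norm (a - a0) \<le> \<delta> \<Longrightarrow>
        inner v (a - a0) \<le> e * norm (a - a0)"
      using v e unfolding frechet_normal_cone_def by blast
    have "\<forall>\<^sub>F t in at_right 0. norm (q t - a0) < \<delta>"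
      using to_a0 \<open>\<delta> > 0\<close> order_tendstoD(2) by blast
    with in_A eventually_at_right_less[of 0] have "\<forall>\<^sub>F t in at_right 0.
        inner v ((q t - a0) /\<^sub>R t) \<le> e * norm ((q t - a0) /\<^sub>R t)"
    proof eventually_elim
      case (elim t)
      then have "inner v (q t - a0) \<le> e * norm (q t - a0)"
        using \<delta> by simp
      with \<open>0 < t\<close> show ?case
        by (simp add: divide_right_mono)
    qed
    moreover have "((\<lambda>t. inner v ((q t - a0) /\<^sub>R t)) \<longlongrightarrow> inner v d) (at_right 0)"
      "((\<lambda>t. e * norm ((q t - a0) /\<^sub>R t)) \<longlongrightarrow> e * norm d) (at_right 0)"
      by (intro tendsto_intros tangent)+
    ultimately show ?thesis
      by (intro tendsto_le[of "at_right 0"]) auto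
  qed
  then have "\<forall>\<^sub>F e in at_right 0. inner v d \<le> e * norm d"
    by (auto intro: eventually_mono[OF eventually_at_right_less])
  moreover have "((\<lambda>e. e * norm d) \<longlongrightarrow> 0 * norm d) (at_right 0)"
    by (intro tendsto_intros)
  ultimately show ?thesis
    by (intro tendsto_le[of "at_right 0" "\<lambda>e. e * norm d" 0 "\<lambda>_. inner v d"]) auto
qed

lemma frechet_normal_cone_below_graph:
  fixes \<phi> :: "'a::real_inner \<Rightarrow> real"
  assumes deriv: "(\<phi> has_derivative (\<lambda>h. - inner d h)) (at u)"
    and below: "\<And>x y. (x, y) \<in> A \<Longrightarrow> y \<le> \<phi> x"
  shows "(d, 1) \<in> frechet_normal_cone A (u, \<phi> u)"
  unfolding frechet_normal_cone_def
proof (intro CollectI allI impI)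
  fix e :: real
  assume "e > 0"
  then obtain \<delta> where "\<delta> > 0" and \<delta>: "\<And>x. norm (x - u) < \<delta> \<Longrightarrow>
      \<bar>\<phi> x - \<phi> u + inner d (x - u)\<bar> \<le> e * norm (x - u)"
    using deriv unfolding has_derivative_at_alt by fastforce
  show "\<exists>\<delta>>0. \<forall>a\<in>A. norm (a - (u, \<phi> u)) \<le> \<delta> \<longrightarrow>
      inner (d, 1) (a - (u, \<phi> u)) \<le> e * norm (a - (u, \<phi> u))"
  proof (intro exI[of _ "\<delta> / 2"] conjI ballI impI)
    fix a
    assume "a \<in> A" and close: "norm (a - (u, \<phi> u)) \<le> \<delta> / 2"
    obtain x y where a: "a = (x, y)" by (cases a)
    have x_close: "norm (x - u) \<le> norm (a - (u, \<phi> u))"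
      using norm_fst_le[of "x - u" "y - \<phi> u"] by (simp add: a)
    have "inner (d, 1) (a - (u, \<phi> u)) = inner d (x - u) + (y - \<phi> u)"
      by (simp add: a)
    also have "\<dots> \<le> \<phi> x - \<phi> u + inner d (x - u)"
      using below \<open>a \<in> A\<close> by (simp add: a)
    also have "\<dots> \<le> e * norm (x - u)"
      using \<delta>[of x] x_close close \<open>\<delta> > 0\<close> by simp
    also have "\<dots> \<le> e * norm (a - (u, \<phi> u))"
      using x_close \<open>e > 0\<close> by simp
    finally show "inner (d, 1) (a - (u, \<phi> u)) \<le> e * norm (a - (u, \<phi> u))" .
  qed (use \<open>\<delta> > 0\<close> in simp)
qed

lemma neg_ln_subgradient_bound:
  assumes nonneg: "\<And>x. g x \<ge> 0" and "g u > 0" and p: "p \<in> subdiff (neg_ln g) u"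
  shows "g x \<le> g u * exp (- inner p (x - u))"
proof (cases "g x > 0")
  case True
  have "neg_ln g u + ereal (inner p (x - u)) \<le> neg_ln g x"
    using p by (simp add: subdiff_def)
  then have "ln (g x) \<le> ln (g u) - inner p (x - u)"
    using True \<open>g u > 0\<close> by (simp add: neg_ln_def)
  then have "exp (ln (g x)) \<le> exp (ln (g u) - inner p (x - u))"
    by simp
  then show ?thesis
    using True \<open>g u > 0\<close> by (simp add: exp_diff exp_minus field_simps)
next
  case False
  then show ?thesis using nonneg[of x] \<open>g u > 0\<close> by simp
qed

lemma subgradient_frechet_normal_lift:
  assumes nonneg: "\<And>x. g x \<ge> 0" and "g u > 0" and p: "p \<in> subdiff (neg_ln g) u"
  shows "(g u *\<^sub>R p, 1) \<in> frechet_normal_cone (lift g) (u, g u)"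
proof -
  define \<phi> where "\<phi> x = g u * exp (- inner p (x - u))" for x
  have "(\<phi> has_derivative (\<lambda>h. - inner (g u *\<^sub>R p) h)) (at u)"
    unfolding \<phi>_def by (auto intro!: derivative_eq_intros)
  moreover have "y \<le> \<phi> x" if "(x, y) \<in> lift g" for x y
    using that neg_ln_subgradient_bound[OF nonneg \<open>g u > 0\<close> p, of x]
    by (auto simp: lift_def \<phi>_def)
  ultimately have "(g u *\<^sub>R p, 1) \<in> frechet_normal_cone (lift g) (u, \<phi> u)"
    by (rule frechet_normal_cone_below_graph)
  then show ?thesis by (simp add: \<phi>_def)
qed

lemma log_concave_ge_exp_segment:
  assumes "log_concave g" and "g u > 0" and "g x > 0" and "0 < t" and "t < 1"
  shows "g u * exp (t * (ln (g x) - ln (g u))) \<le> g (u + t *\<^sub>R (x - u))"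
proof -
  have "g u powr (1 - t) * g x powr t \<le> g ((1 - t) *\<^sub>R u + t *\<^sub>R x)"
    using assms unfolding log_concave_def by blast
  moreover have "g u powr (1 - t) * g x powr t = g u * exp (t * (ln (g x) - ln (g u)))"
    using assms by (simp add: powr_def exp_add[symmetric] exp_diff algebra_simps)
  ultimately show ?thesis by (simp add: algebra_simps)
qed

lemma tendsto_exp_difference_quotient:
  "((\<lambda>t. (exp (t * c) - 1) / t) \<longlongrightarrow> (c::real)) (at_right 0)"
proof -
  have "((\<lambda>t. exp (t * c)) has_field_derivative exp (0 * c) * c) (at 0 within {0<..})"
    by (auto intro!: derivative_eq_intros)
  then show ?thesis by (simp add: has_field_derivative_iff)
qed

lemma frechet_normal_lift_inner_le:
  assumes "log_concave g" and "g u > 0" and "g x > 0"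
    and normal: "(w, s) \<in> frechet_normal_cone (lift g) (u, g u)"
  shows "inner w (x - u) + s * (g u * (ln (g x) - ln (g u))) \<le> 0"
proof -
  define c where "c = ln (g x) - ln (g u)"
  define q where "q t = (u + t *\<^sub>R (x - u), g u * exp (t * c))" for t
  have "((\<lambda>t. (x - u, g u * ((exp (t * c) - 1) / t))) \<longlongrightarrow> (x - u, g u * c)) (at_right 0)"
    by (intro tendsto_intros tendsto_exp_difference_quotient)
  moreover have "\<forall>\<^sub>F t in at_right 0.
      (x - u, g u * ((exp (t * c) - 1) / t)) = (q t - (u, g u)) /\<^sub>R t"
    by (auto intro!: eventually_mono[OF eventually_at_right_less]
        simp: q_def field_simps)
  ultimately have tangent: "((\<lambda>t. (q t - (u, g u)) /\<^sub>R t) \<longlongrightarrow> (x - u, g u * c)) (at_right 0)"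
    by (rule Lim_transform_eventually)
  have "\<forall>\<^sub>F t in at_right 0. 0 < t \<and> t < (1::real)"
    unfolding eventually_at_right_field by (intro exI[of _ 1]) auto
  then have "\<forall>\<^sub>F t in at_right 0. q t \<in> lift g"
  proof (rule eventually_mono)
    fix t :: real
    assume "0 < t \<and> t < 1"
    then have "g u * exp (t * c) \<le> g (u + t *\<^sub>R (x - u))"
      using log_concave_ge_exp_segment assms c_def by blast
    moreover have "0 < g u * exp (t * c)" using \<open>g u > 0\<close> by simp
    ultimately show "q t \<in> lift g"
      by (auto simp: q_def lift_def supp_def intro!: closure_subset[THEN subsetD])
  qed
  with normal tangent have "inner (w, s) (x - u, g u * c) \<le> 0"
    by (rule frechet_normal_cone_inner_tangent_le)
  then show ?thesis by (simp add: c_def)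
qed

lemma frechet_normal_lift_snd_nonneg:
  assumes "g u > 0" and normal: "(w, s) \<in> frechet_normal_cone (lift g) (u, g u)"
  shows "s \<ge> 0"
proof -
  define q where "q t = (u, g u - t)" for t
  have "\<forall>\<^sub>F t in at_right 0. (0, -1) = (q t - (u, g u)) /\<^sub>R t"
    by (auto intro!: eventually_mono[OF eventually_at_right_less] simp: q_def)
  then have tangent: "((\<lambda>t. (q t - (u, g u)) /\<^sub>R t) \<longlongrightarrow> (0, -1)) (at_right 0)"
    by (rule Lim_transform_eventually[OF tendsto_const])
  have "\<forall>\<^sub>F t in at_right 0. 0 < t \<and> t < g u"
    using \<open>g u > 0\<close> unfolding eventually_at_right_field by (intro exI[of _ "g u"]) auto
  then have "\<forall>\<^sub>F t in at_right 0. q t \<in> lift g"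
    by (rule eventually_mono)
      (use \<open>g u > 0\<close> in \<open>auto simp: q_def lift_def supp_def intro!: closure_subset[THEN subsetD]\<close>)
  with normal tangent have "inner (w, s) (0, -1) \<le> 0"
    by (rule frechet_normal_cone_inner_tangent_le)
  then show ?thesis by simp
qed

lemma frechet_normal_lift_subgradient:
  assumes "log_concave g" and "g u > 0" and "s > 0"
    and normal: "(w, s) \<in> frechet_normal_cone (lift g) (u, g u)"
  shows "(1 / (s * g u)) *\<^sub>R w \<in> subdiff (neg_ln g) u"
  unfolding subdiff_def
proof (intro CollectI allI)
  fix x
  show "neg_ln g u + ereal (inner ((1 / (s * g u)) *\<^sub>R w) (x - u)) \<le> neg_ln g x"
  proof (cases "g x > 0")
    case True
    have "inner w (x - u) + s * (g u * (ln (g x) - ln (g u))) \<le> 0"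
      using frechet_normal_lift_inner_le assms True by blast
    then have "inner w (x - u) / (s * g u) + (ln (g x) - ln (g u)) \<le> 0"
      using \<open>s > 0\<close> \<open>g u > 0\<close> by (simp add: field_simps)
    then show ?thesis
      using True \<open>g u > 0\<close> by (simp add: neg_ln_def)
  qed (simp add: neg_ln_def)
qed

lemma frechet_normal_lift_inner_pos:
  assumes "log_concave g" and origin: "0 \<in> interior (supp g)" and "g u > 0"
    and normal: "(w, s) \<in> frechet_normal_cone (lift g) (u, g u)" and "(w, s) \<noteq> 0"
    and subgradients: "\<And>p. p \<in> subdiff (neg_ln g) u \<Longrightarrow> inner p u > -1"
  shows "inner (u, g u) (w, s) > 0"
proof -
  consider "s > 0" | "s = 0"
    using frechet_normal_lift_snd_nonneg[OF \<open>g u > 0\<close> normal] by fastforce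
  then show ?thesis
  proof cases
    case 1
    then have "inner ((1 / (s * g u)) *\<^sub>R w) u > -1"
      using subgradients frechet_normal_lift_subgradient assms by blast
    then have "inner w u > - (s * g u)"
      using \<open>s > 0\<close> \<open>g u > 0\<close> by (simp add: field_simps)
    then show ?thesis by (simp add: inner_commute)
  next
    case 2
    with \<open>(w, s) \<noteq> 0\<close> have "w \<noteq> 0" by (simp add: zero_prod_def)
    obtain r where "r > 0" and "ball 0 r \<subseteq> supp g"
      using origin mem_interior by blast
    define z where "z = (r / 2 / norm w) *\<^sub>R w"
    have "norm z = r / 2" using \<open>w \<noteq> 0\<close> \<open>r > 0\<close> by (simp add: z_def)
    with \<open>r > 0\<close> have "z \<in> ball 0 r" by simp
    with \<open>ball 0 r \<subseteq> supp g\<close> have "g z > 0" by (auto simp: supp_def)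
    then have "inner w (z - u) \<le> 0"
      using frechet_normal_lift_inner_le assms 2 by fastforce
    moreover have "inner w z = r / 2 * norm w"
      using \<open>w \<noteq> 0\<close> by (simp add: z_def power2_norm_eq_inner[symmetric] power2_eq_square)
    moreover have "r / 2 * norm w > 0" using \<open>r > 0\<close> \<open>w \<noteq> 0\<close> by simp
    ultimately show ?thesis by (simp add: 2 inner_diff_right inner_commute)
  qed
qed

theorem mainTheorem9:
  fixes g :: "'a::euclidean_space \<Rightarrow> real" and U :: "'a set"
  assumes "\<And>x. g x \<ge> 0"
    and "proper_fun g"
    and "log_concave g"
    and "0 \<in> interior (supp g)"
  shows "star_like_wrt U g \<longleftrightarrow>
    (\<forall>u \<in> U \<inter> supp g. \<forall>p \<in> subdiff (neg_ln g) u. inner p u > -1)"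
proof
  assume star: "star_like_wrt U g"
  show "\<forall>u \<in> U \<inter> supp g. \<forall>p \<in> subdiff (neg_ln g) u. inner p u > -1"
  proof (intro ballI)
    fix u p
    assume u: "u \<in> U \<inter> supp g" and p: "p \<in> subdiff (neg_ln g) u"
    then have "g u > 0" by (simp add: supp_def)
    have "inner (u, g u) (g u *\<^sub>R p, 1) > 0"
      using star u subgradient_frechet_normal_lift[OF assms(1) \<open>g u > 0\<close> p]
      unfolding star_like_wrt_def by (fastforce simp: zero_prod_def)
    then have "g u * (inner p u + 1) > 0" by (simp add: algebra_simps inner_commute)
    with \<open>g u > 0\<close> show "inner p u > -1" by (simp add: zero_less_mult_iff)
  qed
next
  assume "\<forall>u \<in> U \<inter> supp g. \<forall>p \<in> subdiff (neg_ln g) u. inner p u > -1"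
  then show "star_like_wrt U g"
    unfolding star_like_wrt_def
    using frechet_normal_lift_inner_pos[OF assms(3,4)] by (force simp: supp_def)
qed

end
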